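(* Let $n,x$ be integers with $1<x<n$, so that $G=C_{2n}(x,1,n)$ is a $5$-regular circulant graph. If $n\equiv 1 \pmod 3$, $x\equiv 2\pmod 3$ and $2<x<\tfrac{n}{2}$, then $G$ is word-representable.
   Context: Two distinct letters $x,y$ alternate in a word $w$ if, after deleting all other letters from $w$, the resulting word is of the form $xyxy\cdots$ or $yxyx\cdots$ (of even or odd length). A graph $G=(V,E)$ is word-representable if there is a word $w$ over the alphabet $V$, containing every letter of $V$ at least once, such that for all distinct $x,y\in V$, $xy\in E$ if and only if $x$ and $y$ alternate in $w$. For an integer $m$ and a set $R$ of positive integers each at most $m/2$, the circulant graph $C_m(R)$ has vertex set $\{0,1,\dots,m-1\}$, with $i$ and $j$ adjacent iff $\min(|i-j|,\,m-|i-j|)\in R$. $C_{2n}(x,1,n)$ denotes the circulant graph on $2n$ vertices with jump set $\{1,x,n\}$; it is $5$-regular exactly when $1<x<n$. *)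

theory Defs
  imports Main
begin

definition alternate :: "'a list \<Rightarrow> 'a \<Rightarrow> 'a \<Rightarrow> bool" where
  "alternate w x y \<longleftrightarrow>
     (let u = filter (\<lambda>c. c = x \<or> c = y) w in
        \<forall>i. Suc i < length u \<longrightarrow> u ! i \<noteq> u ! Suc i)"

definition word_representable :: "'a set \<Rightarrow> ('a \<Rightarrow> 'a \<Rightarrow> bool) \<Rightarrow> bool" where
  "word_representable V E \<longleftrightarrow>
     (\<exists>w. set w = V \<and>
        (\<forall>x\<in>V. \<forall>y\<in>V. x \<noteq> y \<longrightarrow> (E x y \<longleftrightarrow> alternate w x y)))"

definition circ_adj :: "nat \<Rightarrow> nat set \<Rightarrow> nat \<Rightarrow> nat \<Rightarrow> bool" where
  "circ_adj m R i j \<longleftrightarrow>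
     i < m \<and> j < m \<and>
     (let d = (if i \<le> j then j - i else i - j) in min d (m - d) \<in> R)"

end

theory Submission
  imports Defs
begin

text \<open>Orient every edge of \<open>C\<^sub>2\<^sub>n(x,1,n)\<close> towards the later vertex in the order that lists
  the residue classes 0, 1, 2 mod 3 one after another, each increasingly. As \<open>n \<equiv> 1\<close> and
  \<open>x \<equiv> 2 (mod 3)\<close>, residues never drop along an arc, and together with \<open>2x < n\<close> a short case
  analysis shows that directed paths have at most three arcs and that the ends of a three-arc path
  are not adjacent. Hence the orientation is semi-transitive, and a graph with a semi-transitive
  orientation is word-representable (Halldorsson, Kitaev, Pyatkin): take the vertex order followed
  by one block per non-adjacent pair \<open>a, b\<close>, in which \<open>a\<close> and \<open>b\<close> do not alternate while
  every arc from \<open>p\<close> to \<open>q\<close> still reads \<open>p q p q\<close>.\<close>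

definition ranked_arc ::
    "'a set \<Rightarrow> ('a \<Rightarrow> 'a \<Rightarrow> bool) \<Rightarrow> ('a \<Rightarrow> 'b::linorder) \<Rightarrow> 'a \<Rightarrow> 'a \<Rightarrow> bool"
  where "ranked_arc V E r p q \<longleftrightarrow> p \<in> V \<and> q \<in> V \<and> E p q \<and> r p < r q"

text \<open>For an acyclic orientation \<open>A\<close> of \<open>E\<close> this is the absence of shortcuts: if the ends of a
  directed path are adjacent, then so are any two vertices on it.\<close>

definition semi_transitive :: "('a \<Rightarrow> 'a \<Rightarrow> bool) \<Rightarrow> ('a \<Rightarrow> 'a \<Rightarrow> bool) \<Rightarrow> bool"
  where "semi_transitive E A \<longleftrightarrow>
    (\<forall>w x y u. A\<^sup>*\<^sup>* w x \<longrightarrow> A\<^sup>*\<^sup>* x y \<longrightarrow> A\<^sup>*\<^sup>* y u \<longrightarrow> x \<noteq> y \<longrightarrow> E w u \<longrightarrow> E x y)"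

lemma alternate_iff_distinct_adj:
  "alternate w x y \<longleftrightarrow> distinct_adj (filter (\<lambda>c. c = x \<or> c = y) w)"
  by (simp add: alternate_def distinct_adj_conv_nth Let_def)

lemma alternate_commute: "alternate w x y \<longleftrightarrow> alternate w y x"
  unfolding alternate_def by (simp add: disj_commute)

lemma distinct_adj_concat_replicate:
  assumes "x \<noteq> y"
  shows "distinct_adj (concat (replicate k [x, y]))"
proof (induction k)
  case (Suc k)
  then show ?case using assms by (cases k) auto
qed simp

lemma distinct_if_sorted_wrt_rank:
  fixes r :: "'a \<Rightarrow> 'b::linorder"
  shows "sorted_wrt (\<lambda>p q. r p < r q) xs \<Longrightarrow> distinct xs"
  by (induction xs) auto

lemma filter_pair_sorted_wrt:
  fixes r :: "'a \<Rightarrow> 'b::linorder"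
  assumes "sorted_wrt (\<lambda>p q. r p < r q) xs" "p \<in> set xs" "q \<in> set xs" "r p < r q"
  shows "filter (\<lambda>c. c = p \<or> c = q) xs = [p, q]"
  using assms
proof (induction xs)
  case (Cons a xs)
  show ?case
  proof (cases "a = p")
    case True
    with Cons.prems(1) have "p \<notin> set xs" "distinct xs"
      by (auto simp: distinct_if_sorted_wrt_rank)
    moreover have "q \<in> set xs" using Cons.prems(3,4) True by auto
    ultimately have "filter (\<lambda>c. c = p \<or> c = q) xs = [q]"
      by (induction xs) (auto simp: filter_empty_conv)
    with True show ?thesis by simp
  next
    case False
    with Cons show ?thesis by auto
  qed
qed simp

lemma semi_transitive_if_short_paths:
  assumes arc_edge: "\<And>a b. A a b \<Longrightarrow> E a b"
    and no_shortcut: "\<And>a b c d. A a b \<Longrightarrow> A b c \<Longrightarrow> A c d \<Longrightarrow> \<not> E a d"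
    and no_path4: "\<And>a b c d e. A a b \<Longrightarrow> A b c \<Longrightarrow> A c d \<Longrightarrow> A d e \<Longrightarrow> False"
  shows "semi_transitive E A"
  unfolding semi_transitive_def
proof (intro allI impI)
  fix w x y u
  assume "A\<^sup>*\<^sup>* w x" "A\<^sup>*\<^sup>* x y" "A\<^sup>*\<^sup>* y u" "x \<noteq> y" "E w u"
  then obtain i j k where ijk: "(A ^^ i) w x" "(A ^^ j) x y" "(A ^^ k) y u"
    by (meson rtranclp_power)
  have path: "(A ^^ (i + j + k)) w u"
    using ijk relpowp_add by (metis relcomppI)
  have short: "m \<le> 3" if "(A ^^ m) a b" for m a b
  proof (rule ccontr)
    assume "\<not> m \<le> 3"
    then have "(A ^^ (4 + (m - 4))) a b" using that by simp
    then obtain c where "(A ^^ 4) a c" by (metis relpowp_add relcomppE)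
    then show False using no_path4 by (auto simp: numeral_eq_Suc relpowp_Suc_left)
  qed
  have "j \<noteq> 0" using ijk(2) \<open>x \<noteq> y\<close> by (cases j) auto
  then consider "j = 1" | "i + j + k = 2" "i = 0" "k = 0" | "i + j + k = 3"
    using short[OF path] by linarith
  then show "E x y"
  proof cases
    case 1
    then show ?thesis using ijk(2) arc_edge by (metis relpowp_1)
  next
    case 2
    then show ?thesis using ijk \<open>E w u\<close> by simp
  next
    case 3
    then show ?thesis
      using path no_shortcut \<open>E w u\<close> by (auto simp: numeral_eq_Suc relpowp_Suc_left)
  qed
qed

locale ranked_semi_transitive =
  fixes P :: "'a list" and E :: "'a \<Rightarrow> 'a \<Rightarrow> bool" and r :: "'a \<Rightarrow> 'b::linorder"
  assumes sorted_rank: "sorted_wrt (\<lambda>p q. r p < r q) P"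
    and symmetric: "symp_on (set P) E"
    and semi_trans: "semi_transitive E (ranked_arc (set P) E r)"
begin

abbreviation arc :: "'a \<Rightarrow> 'a \<Rightarrow> bool" where
  "arc \<equiv> ranked_arc (set P) E r"

abbreviation reach :: "'a \<Rightarrow> 'a \<Rightarrow> bool" where
  "reach \<equiv> arc\<^sup>*\<^sup>*"

lemma reach_rank_less:
  assumes "reach a b" "a \<noteq> b"
  shows "r a < r b"
proof -
  from assms have "arc\<^sup>+\<^sup>+ a b" by (metis rtranclpD)
  then show ?thesis by (induction rule: tranclp_induct) (auto simp: ranked_arc_def)
qed

lemma reach_antisym: "reach a b \<Longrightarrow> reach b a \<Longrightarrow> a = b"
  using reach_rank_less less_not_sym by blast

definition separating :: "'a set \<Rightarrow> 'a set \<Rightarrow> bool" where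
  "separating X Y \<longleftrightarrow>
    (\<forall>p q. arc p q \<longrightarrow> q \<in> X \<longrightarrow> p \<in> X) \<and> (\<forall>p q. arc p q \<longrightarrow> p \<in> Y \<longrightarrow> q \<in> Y) \<and>
    X \<inter> Y = {} \<and> (\<forall>p \<in> X. \<forall>q \<in> Y. \<not> E p q)"

definition block :: "'a set \<Rightarrow> 'a set \<Rightarrow> 'a list" where
  "block X Y =
    filter (\<lambda>v. v \<notin> Y) P @ filter (\<lambda>v. v \<in> X) P @ filter (\<lambda>v. v \<in> Y) P @ filter (\<lambda>v. v \<notin> X) P"

definition lower :: "'a \<Rightarrow> 'a \<Rightarrow> 'a set" where
  "lower a b = (if reach a b then {v. reach v a} else {v. reach v b})"

definition upper :: "'a \<Rightarrow> 'a \<Rightarrow> 'a set" where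
  "upper a b = (if reach a b then {v. reach b v} else {})"

definition non_edges :: "('a \<times> 'a) list" where
  "non_edges = filter (\<lambda>(a, b). \<not> E a b \<and> r a < r b) (List.product P P)"

definition word :: "'a list" where
  "word = P @ concat (map (\<lambda>(a, b). block (lower a b) (upper a b)) non_edges)"

lemma set_word: "set word = set P"
  by (auto simp: word_def block_def)

lemma filter_pair_block:
  assumes "p \<in> set P" "q \<in> set P" "r p < r q"
  shows "filter (\<lambda>c. c = p \<or> c = q) (block X Y) =
    filter (\<lambda>v. v \<notin> Y) [p, q] @ filter (\<lambda>v. v \<in> X) [p, q] @
    filter (\<lambda>v. v \<in> Y) [p, q] @ filter (\<lambda>v. v \<notin> X) [p, q]"
proof -
  have "filter (\<lambda>c. c = p \<or> c = q) (filter Q P) = filter Q (filter (\<lambda>c. c = p \<or> c = q) P)"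
    for Q by (simp add: conj_commute)
  then show ?thesis by (simp add: block_def filter_pair_sorted_wrt[OF sorted_rank assms])
qed

lemma filter_arc_block:
  assumes "separating X Y" "arc p q"
  shows "filter (\<lambda>c. c = p \<or> c = q) (block X Y) = [p, q, p, q]"
proof -
  have pq: "p \<in> set P" "q \<in> set P" "r p < r q" "E p q" "E q p"
    using assms(2) symmetric by (auto simp: ranked_arc_def symp_on_def)
  with assms have "q \<in> X \<longrightarrow> p \<in> X" "p \<in> Y \<longrightarrow> q \<in> Y"
    "\<not> (p \<in> X \<and> p \<in> Y)" "\<not> (q \<in> X \<and> q \<in> Y)"
    "\<not> (p \<in> X \<and> q \<in> Y)" "\<not> (q \<in> X \<and> p \<in> Y)"
    by (auto simp: separating_def)
  then show ?thesis
    unfolding filter_pair_block[OF pq(1-3)]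
    by (cases "p \<in> X"; cases "q \<in> X"; cases "p \<in> Y"; cases "q \<in> Y") simp_all
qed

text \<open>Semi-transitivity is used exactly here: when \<open>a\<close> reaches \<open>b\<close>, no vertex reaching \<open>a\<close>
  is adjacent to a vertex reached from \<open>b\<close>, as \<open>a, b\<close> are not adjacent.\<close>

lemma separating_lower_upper:
  assumes "\<not> E a b" "r a < r b"
  shows "separating (lower a b) (upper a b)"
proof (cases "reach a b")
  case True
  have "\<not> reach b a" using True assms(2) reach_antisym by blast
  moreover have "\<not> E p q" if "reach p a" "reach b q" for p q
    using semi_trans that True assms by (auto simp: semi_transitive_def)
  moreover have "\<not> (reach v a \<and> reach b v)" for v
    using \<open>\<not> reach b a\<close> by (meson rtranclp_trans)
  ultimately show ?thesis using True
    by (auto simp: separating_def lower_def upper_def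
        intro: converse_rtranclp_into_rtranclp rtranclp.rtrancl_into_rtrancl)
next
  case False
  then show ?thesis
    by (auto simp: separating_def lower_def upper_def intro: converse_rtranclp_into_rtranclp)
qed

lemma alternate_word_if_arc:
  assumes "arc p q"
  shows "alternate word p q"
proof -
  let ?pair = "filter (\<lambda>c. c = p \<or> c = q)"
  have "p \<in> set P" "q \<in> set P" "r p < r q" using assms by (auto simp: ranked_arc_def)
  have concat_map_const_eq:
    "concat (map (\<lambda>_. [p, q, p, q]) L) = concat (replicate (2 * length L) [p, q])"
    for L :: "('a \<times> 'a) list"
    by (induction L) auto
  have blocks: "?pair (case e of (a, b) \<Rightarrow> block (lower a b) (upper a b)) = [p, q, p, q]"
    if "e \<in> set non_edges" for e
    using that filter_arc_block[OF separating_lower_upper assms] by (auto simp: non_edges_def)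
  have "?pair word = [p, q] @ concat (map (\<lambda>_. [p, q, p, q]) non_edges)"
    unfolding word_def filter_append filter_concat map_map
    using filter_pair_sorted_wrt[OF sorted_rank \<open>p \<in> set P\<close> \<open>q \<in> set P\<close> \<open>r p < r q\<close>] blocks
    by (simp cong: map_cong)
  also have "\<dots> = concat (replicate (Suc (2 * length non_edges)) [p, q])"
    using concat_map_const_eq[of non_edges] by simp
  finally show ?thesis
    unfolding alternate_iff_distinct_adj
    using distinct_adj_concat_replicate \<open>r p < r q\<close> by (metis less_irrefl)
qed

lemma not_alternate_word_if_non_edge:
  assumes "a \<in> set P" "b \<in> set P" "\<not> E a b" "r a < r b"
  shows "\<not> alternate word a b"
proof
  let ?pair = "filter (\<lambda>c. c = a \<or> c = b)"
  let ?block = "\<lambda>(a, b). block (lower a b) (upper a b)"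
  assume "alternate word a b"
  then have alt: "distinct_adj (?pair word)" by (simp add: alternate_iff_distinct_adj)
  have "(a, b) \<in> set non_edges" using assms by (simp add: non_edges_def)
  then obtain L R where "non_edges = L @ (a, b) # R" by (meson split_list)
  then have split: "?pair word = (?pair P @ ?pair (concat (map ?block L))) @
      ?pair (block (lower a b) (upper a b)) @ ?pair (concat (map ?block R))"
    by (simp add: word_def)
  from alt[unfolded split]
  have "distinct_adj (?pair (block (lower a b) (upper a b)) @ ?pair (concat (map ?block R)))"
    by (rule distinct_adj_appendD2)
  then have block_alt: "distinct_adj (?pair (block (lower a b) (upper a b)))"
    by (rule distinct_adj_appendD1)
  show False
  proof (cases "reach a b")
    case True
    then have "\<not> reach b a" using assms(4) reach_antisym by blast
    with True have "a \<in> lower a b" "b \<notin> lower a b" "a \<notin> upper a b" "b \<in> upper a b"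
      by (auto simp: lower_def upper_def)
    with block_alt show False by (simp add: filter_pair_block assms)
  next
    case False
    then have "a \<notin> lower a b" "b \<in> lower a b" "upper a b = {}"
      by (auto simp: lower_def upper_def)
    moreover have "a \<noteq> b" using assms(4) by auto
    ultimately show False using block_alt by (simp add: filter_pair_block assms)
  qed
qed

lemma inj_on_r: "inj_on r (set P)"
  using sorted_rank by (simp add: strict_sorted_iff distinct_map flip: sorted_wrt_map)

theorem word_representable: "word_representable (set P) E"
  unfolding word_representable_def
proof (intro exI conjI ballI impI)
  show "set word = set P" by (rule set_word)
next
  fix p q assume pq: "p \<in> set P" "q \<in> set P" "p \<noteq> q"
  then have "r p \<noteq> r q" using inj_on_r by (meson inj_on_contraD)
  then consider "r p < r q" | "r q < r p" by (metis linorder_neqE)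
  then show "E p q \<longleftrightarrow> alternate word p q"
  proof cases
    case 1
    then show ?thesis
      using pq alternate_word_if_arc[of p q] not_alternate_word_if_non_edge[of p q]
      by (auto simp: ranked_arc_def)
  next
    case 2
    have "E p q \<longleftrightarrow> E q p" using pq symmetric by (auto simp: symp_on_def)
    moreover have "E q p \<longleftrightarrow> alternate word q p"
      using 2 pq alternate_word_if_arc[of q p] not_alternate_word_if_non_edge[of q p]
      by (auto simp: ranked_arc_def)
    ultimately show ?thesis by (simp add: alternate_commute)
  qed
qed

end

theorem word_representable_if_semi_transitive:
  fixes r :: "'a \<Rightarrow> 'b::linorder"
  assumes "finite V" "inj_on r V" "symp_on V E" "semi_transitive E (ranked_arc V E r)"
  shows "word_representable V E"
proof -
  obtain xs where "set xs = V" "distinct xs"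
    using assms(1) finite_distinct_list by blast
  define P where "P = sort_key r xs"
  have "set P = V" "distinct P" using \<open>set xs = V\<close> \<open>distinct xs\<close> by (simp_all add: P_def)
  moreover have "sorted_wrt (\<lambda>p q. r p < r q) P"
    using calculation assms(2)
    by (simp add: P_def strict_sorted_iff distinct_map flip: sorted_wrt_map)
  ultimately interpret ranked_semi_transitive P E r
    using assms(3,4) by unfold_locales simp_all
  show ?thesis using word_representable \<open>set P = V\<close> by simp
qed

locale circulant_mod3 =
  fixes n x :: nat
  assumes x_gt_2: "2 < x" and x_lt_half: "2 * x < n"
    and n_mod_3: "n mod 3 = 1" and x_mod_3: "x mod 3 = 2"
begin

abbreviation G :: "nat \<Rightarrow> nat \<Rightarrow> bool" where
  "G \<equiv> circ_adj (2 * n) {1, x, n}"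

definition rank :: "nat \<Rightarrow> nat" where
  "rank v = v mod 3 * (2 * n) + v"

abbreviation arc :: "nat \<Rightarrow> nat \<Rightarrow> bool" where
  "arc \<equiv> ranked_arc {0..<2 * n} G rank"

text \<open>The arcs \<open>p, q\<close> of \<open>G\<close> sorted by their effect on the residue mod 3 (\<open>arc_cases\<close>):
  level arcs (\<open>q = p - x\<close> mod \<open>2n\<close>) keep it, up arcs raise it by one, jump arcs raise it
  from 0 to 2.\<close>

definition level_arc :: "nat \<Rightarrow> nat \<Rightarrow> bool" where
  "level_arc p q \<longleftrightarrow> q + x = p + 2 * n"

definition up_arc :: "nat \<Rightarrow> nat \<Rightarrow> bool" where
  "up_arc p q \<longleftrightarrow> q = p + 1 \<or> p = q + x \<or> q = p + n \<or> (p = 0 \<and> q + 1 = 2 * n)"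

definition jump_arc :: "nat \<Rightarrow> nat \<Rightarrow> bool" where
  "jump_arc p q \<longleftrightarrow> p = q + 1 \<or> q = p + x \<or> p = q + n"

lemma G_iff:
  "G p q \<longleftrightarrow> p < 2 * n \<and> q < 2 * n \<and>
    (q = p + 1 \<or> p = q + 1 \<or> q = p + x \<or> p = q + x \<or> q = p + n \<or> p = q + n \<or>
     q + 1 = p + 2 * n \<or> p + 1 = q + 2 * n \<or> q + x = p + 2 * n \<or> p + x = q + 2 * n)"
  using x_gt_2 x_lt_half unfolding circ_adj_def Let_def by (auto simp: min_def split: if_splits)

lemma mod_3_cases: "(v::nat) mod 3 = 0 \<or> v mod 3 = 1 \<or> v mod 3 = 2"
  by auto

lemma rank_less_iff:
  assumes "p < 2 * n" "q < 2 * n"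
  shows "rank p < rank q \<longleftrightarrow> p mod 3 < q mod 3 \<or> (p mod 3 = q mod 3 \<and> p < q)"
  using assms mod_3_cases[of p] mod_3_cases[of q] unfolding rank_def by auto

lemma arc_mod_3_order:
  assumes "arc p q"
  shows "p mod 3 < q mod 3 \<or> p mod 3 = q mod 3 \<and> p < q"
  using assms rank_less_iff by (auto simp: ranked_arc_def)

lemma inj_on_rank: "inj_on rank {0..<2 * n}"
  by (rule inj_onI) (metis atLeastLessThan_iff rank_less_iff less_irrefl linorder_neqE_nat)

lemma residue_shift:
  "(a + 1) mod 3 = Suc (a mod 3) mod 3" "(a + n) mod 3 = Suc (a mod 3) mod 3"
  "(a + x) mod 3 = Suc (Suc (a mod 3)) mod 3" "(a + 2 * n) mod 3 = Suc (Suc (a mod 3)) mod 3"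
  using mod_add_eq[of a 3 n] mod_add_eq[of a 3 x] mod_add_eq[of a 3 "2 * n"]
  by (simp_all add: n_mod_3 x_mod_3 mod_Suc_eq mod_mult_right_eq[of 2 n 3, symmetric])

lemma double_n_mod_3: "(2 * n) mod 3 = 2"
  using residue_shift(4)[of 0] by simp

lemma level_arc_residue:
  assumes "level_arc p q"
  shows "q mod 3 = p mod 3"
proof -
  from assms have "(q + x) mod 3 = (p + 2 * n) mod 3" by (simp add: level_arc_def)
  then have "Suc (Suc (q mod 3)) mod 3 = Suc (Suc (p mod 3)) mod 3" by (simp only: residue_shift)
  then show ?thesis using mod_3_cases[of p] mod_3_cases[of q] by auto
qed

lemma up_arc_residue:
  assumes "up_arc p q" and order: "p mod 3 < q mod 3 \<or> p mod 3 = q mod 3 \<and> p < q"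
  shows "q mod 3 = Suc (p mod 3)"
proof -
  from assms(1) have "q mod 3 = Suc (p mod 3) mod 3 \<or> p mod 3 = Suc (Suc (q mod 3)) mod 3 \<or>
      p mod 3 = 0 \<and> Suc (q mod 3) mod 3 = 2"
    unfolding up_arc_def
    by (elim disjE conjE) (metis residue_shift double_n_mod_3 mod_0)+
  then show ?thesis using order mod_3_cases[of p] mod_3_cases[of q] by auto
qed

lemma jump_arc_residue:
  assumes "jump_arc p q" and order: "p mod 3 < q mod 3 \<or> p mod 3 = q mod 3 \<and> p < q"
  shows "p mod 3 = 0 \<and> q mod 3 = 2"
proof -
  from assms(1) have "p mod 3 = Suc (q mod 3) mod 3 \<or> q mod 3 = Suc (Suc (p mod 3)) mod 3"
    unfolding jump_arc_def by (elim disjE) (metis residue_shift)+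
  then show ?thesis using order mod_3_cases[of p] mod_3_cases[of q] by auto
qed

lemma arc_types:
  assumes "arc p q"
  shows "level_arc p q \<or> up_arc p q \<or> jump_arc p q"
proof -
  have bounds: "p < 2 * n" "q < 2 * n" and "G p q"
    using assms by (auto simp: ranked_arc_def)
  note order = arc_mod_3_order[OF assms]
  from \<open>G p q\<close> have "q = p + 1 \<or> p = q + 1 \<or> q = p + x \<or> p = q + x \<or> q = p + n \<or> p = q + n \<or>
     q + 1 = p + 2 * n \<or> p + 1 = q + 2 * n \<or> q + x = p + 2 * n \<or> p + x = q + 2 * n"
    unfolding G_iff by blast
  then show ?thesis
  proof (elim disjE)
    assume "q + 1 = p + 2 * n"
    then have "p = 0" "q + 1 = 2 * n" using bounds by linarith+
    then show ?thesis by (simp add: up_arc_def)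
  next
    assume wrap: "p + 1 = q + 2 * n"
    then have "q = 0" using bounds by linarith
    with wrap have "(p + 1) mod 3 = 2" using double_n_mod_3 by simp
    then have "p mod 3 = 1" using mod_3_cases[of p] by (auto simp: mod_Suc)
    with order \<open>q = 0\<close> show ?thesis by simp
  next
    assume wrap: "p + x = q + 2 * n"
    then have "q < p" using bounds x_lt_half by linarith
    moreover from wrap have "p mod 3 = q mod 3"
      using level_arc_residue[of q p] by (simp add: level_arc_def)
    ultimately show ?thesis using order by simp
  qed (simp_all add: level_arc_def up_arc_def jump_arc_def)
qed

lemma arc_cases:
  assumes "arc p q"
  shows "level_arc p q \<and> q mod 3 = p mod 3 \<or> up_arc p q \<and> q mod 3 = Suc (p mod 3) \<or>
    jump_arc p q \<and> p mod 3 = 0 \<and> q mod 3 = 2"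
  using arc_types[OF assms] level_arc_residue arc_mod_3_order[OF assms]
    up_arc_residue jump_arc_residue
  by blast

lemma no_level_level: "level_arc a b \<Longrightarrow> level_arc b c \<Longrightarrow> c < 2 * n \<Longrightarrow> False"
  using x_lt_half unfolding level_arc_def by linarith

lemma no_level_rise_level:
  "level_arc a b \<Longrightarrow> up_arc b c \<or> jump_arc b c \<Longrightarrow> level_arc c d \<Longrightarrow> d < 2 * n \<Longrightarrow> False"
  using x_lt_half unfolding level_arc_def up_arc_def jump_arc_def by arith

lemma no_level_up_up_level:
  "level_arc a b \<Longrightarrow> up_arc b c \<Longrightarrow> up_arc c d \<Longrightarrow> level_arc d e \<Longrightarrow>
    c < 2 * n \<Longrightarrow> d < 2 * n \<Longrightarrow> e < 2 * n \<Longrightarrow> False"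
  using x_lt_half unfolding level_arc_def up_arc_def by arith

lemma x_ne_3: "x \<noteq> 3" and n_ne_3x: "n \<noteq> 3 * x"
  using x_mod_3 n_mod_3 by auto

lemma level_up_up_not_adjacent:
  "level_arc a b \<Longrightarrow> up_arc b c \<Longrightarrow> up_arc c d \<Longrightarrow>
    b < 2 * n \<Longrightarrow> c < 2 * n \<Longrightarrow> d < 2 * n \<Longrightarrow> \<not> G a d"
  using x_gt_2 x_lt_half x_ne_3 n_ne_3x unfolding level_arc_def up_arc_def G_iff by arith

lemma up_level_up_not_adjacent:
  "up_arc a b \<Longrightarrow> level_arc b c \<Longrightarrow> up_arc c d \<Longrightarrow>
    b < 2 * n \<Longrightarrow> c < 2 * n \<Longrightarrow> d < 2 * n \<Longrightarrow> \<not> G a d"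
  using x_gt_2 x_lt_half x_ne_3 n_ne_3x unfolding level_arc_def up_arc_def G_iff by arith

lemma up_up_level_not_adjacent:
  "up_arc a b \<Longrightarrow> up_arc b c \<Longrightarrow> level_arc c d \<Longrightarrow>
    b < 2 * n \<Longrightarrow> c < 2 * n \<Longrightarrow> d < 2 * n \<Longrightarrow> \<not> G a d"
  using x_gt_2 x_lt_half x_ne_3 n_ne_3x unfolding level_arc_def up_arc_def G_iff by arith

text \<open>Residues never drop along an arc and rise by at most 2 along a path, so a path with four arcs
  has two level arcs, separated by at most two rising ones, and these patterns are excluded above.\<close>

lemma no_arc_path4:
  assumes "arc a b" "arc b c" "arc c d" "arc d e"
  shows False
proof -
  have bounds: "b < 2 * n" "c < 2 * n" "d < 2 * n" "e < 2 * n"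
    using assms by (auto simp: ranked_arc_def)
  have "\<not> (level_arc a b \<and> level_arc b c)" "\<not> (level_arc b c \<and> level_arc c d)"
    "\<not> (level_arc c d \<and> level_arc d e)"
    using no_level_level bounds by blast+
  moreover have "\<not> (level_arc a b \<and> (up_arc b c \<or> jump_arc b c) \<and> level_arc c d)"
    "\<not> (level_arc b c \<and> (up_arc c d \<or> jump_arc c d) \<and> level_arc d e)"
    using no_level_rise_level bounds by blast+
  moreover have "\<not> (level_arc a b \<and> up_arc b c \<and> up_arc c d \<and> level_arc d e)"
    using no_level_up_up_level bounds by blast
  moreover have "e mod 3 < 3" by simp
  ultimately show False
    using arc_cases[OF assms(1)] arc_cases[OF assms(2)] arc_cases[OF assms(3)]
      arc_cases[OF assms(4)]
    by (elim disjE conjE; (blast | linarith))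
qed

lemma no_arc_path3_shortcut:
  assumes "arc a b" "arc b c" "arc c d"
  shows "\<not> G a d"
proof
  assume "G a d"
  have bounds: "b < 2 * n" "c < 2 * n" "d < 2 * n"
    using assms by (auto simp: ranked_arc_def)
  have "\<not> (level_arc a b \<and> level_arc b c)" "\<not> (level_arc b c \<and> level_arc c d)"
    using no_level_level bounds by blast+
  moreover have "\<not> (level_arc a b \<and> (up_arc b c \<or> jump_arc b c) \<and> level_arc c d)"
    using no_level_rise_level bounds by blast
  moreover have "\<not> (level_arc a b \<and> up_arc b c \<and> up_arc c d)"
    "\<not> (up_arc a b \<and> level_arc b c \<and> up_arc c d)" "\<not> (up_arc a b \<and> up_arc b c \<and> level_arc c d)"
    using level_up_up_not_adjacent up_level_up_not_adjacent up_up_level_not_adjacent bounds \<open>G a d\<close>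
    by blast+
  moreover have "d mod 3 < 3" by simp
  ultimately show False
    using arc_cases[OF assms(1)] arc_cases[OF assms(2)] arc_cases[OF assms(3)]
    by (elim disjE conjE; (blast | linarith))
qed

lemma semi_transitive_arc: "semi_transitive G arc"
proof (rule semi_transitive_if_short_paths)
  show "G a b" if "arc a b" for a b
    using that by (simp add: ranked_arc_def)
qed (use no_arc_path3_shortcut no_arc_path4 in blast)+

end

theorem theorem25:
  fixes n x :: nat
  assumes "1 < x" and "x < n"
    and "n mod 3 = 1" and "x mod 3 = 2"
    and "2 < x" and "2 * x < n"
  shows "word_representable {0..<2*n} (circ_adj (2*n) {1, x, n})"
proof -
  interpret circulant_mod3 n x
    using assms by unfold_locales auto
  have "symp_on {0..<2 * n} G"
    unfolding symp_on_def G_iff by auto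
  then show ?thesis
    using word_representable_if_semi_transitive[OF _ inj_on_rank _ semi_transitive_arc] by simp
qed

end
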